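(* For every $\mu\in[\mu_m,\mu_M]$, letting $$V^\infty_N(\mu):=\sup_{\tau\in\mathcal T(\mathbb F^B)}\mathsf E\Big[\int_0^\tau e^{-(\rho+\mu)t}(\alpha+\nu\mu)X^1_tdt+e^{-(\rho+\mu)\tau}\hat f(N,\mu)X^1_\tau\Big],$$ we have $V^\infty_N(\mu)=\max\{\beta_N(\mu),\hat f(N,\mu)\}$.
   Context: Let $(B_t)_{t\ge0}$ be a standard Brownian motion, $\mathbb F^B$ its augmented filtration and $\mathcal T(\mathbb F^B)$ the set of $\mathbb F^B$-stopping times with values in $[0,\infty]$ (terms discounted at $\tau$ are $0$ on $\{\tau=\infty\}$). Fix $\theta>0$, $\alpha\ge0$, $\sigma>0$, $\rho>0$, $\nu\in[0,1]$, $\hat\rho>0$, $0<\mu_m\le\mu_M<\infty$, $\hat\mu\in[\mu_m,\mu_M]$, and assume $\theta-\alpha-\rho-\mu_m<0$. Let $X^1_t=\exp((\theta-\alpha-\sigma^2/2)t+\sigma B_t)$. For $\mu\in[\mu_m,\mu_M]$, $\hat f(N,\mu):=(\hat\rho+\hat\mu)/(\rho+\mu)$ and $\beta_N(\mu):=(\alpha+\nu\mu)/(\rho+\mu+\alpha-\theta)$. *)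

theory Defs
  imports "HOL-Probability.Probability"
begin

definition natural_filtration :: "'a measure \<Rightarrow> (real \<Rightarrow> 'a \<Rightarrow> real) \<Rightarrow> real \<Rightarrow> 'a set set" where
  "natural_filtration M B t = sigma_sets (space M)
     {B r -` A \<inter> space M | r A. 0 \<le> r \<and> r \<le> t \<and> A \<in> sets borel}"

definition std_brownian_motion :: "'a measure \<Rightarrow> (real \<Rightarrow> 'a \<Rightarrow> real) \<Rightarrow> bool" where
  "std_brownian_motion M B \<longleftrightarrow>
     prob_space M \<and>
     (\<forall>t. B t \<in> borel_measurable M) \<and>
     (\<forall>\<omega>\<in>space M. B 0 \<omega> = 0) \<and>
     (\<forall>\<omega>\<in>space M. continuous_on {0..} (\<lambda>t. B t \<omega>)) \<and>
     (\<forall>s t. 0 \<le> s \<longrightarrow> s < t \<longrightarrow>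
        distributed M lborel (\<lambda>\<omega>. B t \<omega> - B s \<omega>) (normal_density 0 (sqrt (t - s))) \<and>
        prob_space.indep_sets M
          (\<lambda>i::bool. if i then natural_filtration M B s
                      else {(\<lambda>\<omega>. B t \<omega> - B s \<omega>) -` A \<inter> space M | A. A \<in> sets borel}) UNIV)"

definition null_subsets :: "'a measure \<Rightarrow> 'a set set" where
  "null_subsets M = {N. N \<subseteq> space M \<and> (\<exists>A\<in>sets M. N \<subseteq> A \<and> emeasure M A = 0)}"

definition augmented_filtration :: "'a measure \<Rightarrow> (real \<Rightarrow> 'a \<Rightarrow> real) \<Rightarrow> real \<Rightarrow> 'a set set" where
  "augmented_filtration M B t = sigma_sets (space M) (natural_filtration M B t \<union> null_subsets M)"

definition stopping_times_B :: "'a measure \<Rightarrow> (real \<Rightarrow> 'a \<Rightarrow> real) \<Rightarrow> ('a \<Rightarrow> ennreal) set" where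
  "stopping_times_B M B = {\<tau>. \<forall>t\<ge>0. {\<omega>\<in>space M. \<tau> \<omega> \<le> ennreal t} \<in> augmented_filtration M B t}"

definition fhat :: "real \<Rightarrow> real \<Rightarrow> real \<Rightarrow> real \<Rightarrow> real" where
  "fhat \<rho>h \<mu>h \<rho> \<mu> = (\<rho>h + \<mu>h) / (\<rho> + \<mu>)"

definition betaN :: "real \<Rightarrow> real \<Rightarrow> real \<Rightarrow> real \<Rightarrow> real \<Rightarrow> real" where
  "betaN \<alpha> \<nu> \<rho> \<theta> \<mu> = (\<alpha> + \<nu> * \<mu>) / (\<rho> + \<mu> + \<alpha> - \<theta>)"

definition reward :: "(real \<Rightarrow> 'a \<Rightarrow> real) \<Rightarrow> real \<Rightarrow> real \<Rightarrow> real
                     \<Rightarrow> ('a \<Rightarrow> ennreal) \<Rightarrow> 'a \<Rightarrow> ennreal" where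
  "reward X r a f \<tau> \<omega> =
     (\<integral>\<^sup>+ t. indicator {t. 0 \<le> t \<and> ennreal t < \<tau> \<omega>} t * ennreal (exp (- r * t) * a * X t \<omega>) \<partial>lborel)
     + (if \<tau> \<omega> = \<top> then 0 else ennreal (exp (- r * enn2real (\<tau> \<omega>)) * f * X (enn2real (\<tau> \<omega>)) \<omega>))"

end

(*
  Put d = rho + mu + alpha - theta > 0. After discounting, the payoff process is the geometric
  Brownian motion Y_t = exp (-(d + sigma^2/2) t + sigma B_t), and exp (d t) Y_t is a martingale
  because the increments of B are independent Gaussians. Hence d * (integral of Y over [0, t]) + Y_t
  has expectation 1 for every t, and optional stopping gives
  E [d * (integral of Y over [0, tau]) + Y_tau] <= 1. The reward a * (integral of Y) + f * Y_tau
  is at most max (a/d) f times this quantity, so the value is at most max (beta, fhat);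
  stopping at once earns fhat and never stopping earns a/d = beta.
*)

theory Submission
  imports Defs
begin

lemma nn_integral_exp_normal:
  fixes sd s :: real
  assumes sd: "sd > 0" and Z: "distributed M lborel Z (normal_density 0 sd)"
  shows "(\<integral>\<^sup>+\<omega>. ennreal (exp (s * Z \<omega>)) \<partial>M) = ennreal (exp (s\<^sup>2 * sd\<^sup>2 / 2))"
proof -
  have shift: "normal_density 0 sd x * exp (s * x) = exp (s\<^sup>2 * sd\<^sup>2 / 2) * normal_density (s * sd\<^sup>2) sd x"
    for x
  proof -
    have "-(x - 0)\<^sup>2 / (2 * sd\<^sup>2) + s * x = s\<^sup>2 * sd\<^sup>2 / 2 + (-(x - s * sd\<^sup>2)\<^sup>2 / (2 * sd\<^sup>2))"
      using sd by (simp add: field_simps power2_eq_square)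
    then show ?thesis
      unfolding normal_density_def by (simp add: exp_add[symmetric])
  qed
  interpret shifted: prob_space "density lborel (normal_density (s * sd\<^sup>2) sd)"
    using sd by (rule prob_space_normal_density)
  have total: "(\<integral>\<^sup>+x. ennreal (normal_density (s * sd\<^sup>2) sd x) \<partial>lborel) = 1"
    using shifted.emeasure_space_1 by (simp add: emeasure_density)
  have "(\<integral>\<^sup>+\<omega>. ennreal (exp (s * Z \<omega>)) \<partial>M)
      = (\<integral>\<^sup>+x. ennreal (normal_density 0 sd x) * ennreal (exp (s * x)) \<partial>lborel)"
    using distributed_nn_integral[OF Z, of "\<lambda>x. ennreal (exp (s * x))"] by simp
  also have "\<dots> = (\<integral>\<^sup>+x. ennreal (exp (s\<^sup>2 * sd\<^sup>2 / 2)) * ennreal (normal_density (s * sd\<^sup>2) sd x) \<partial>lborel)"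
    by (intro nn_integral_cong) (simp add: shift[symmetric] ennreal_mult[symmetric])
  also have "\<dots> = ennreal (exp (s\<^sup>2 * sd\<^sup>2 / 2))"
    by (subst nn_integral_cmult) (simp_all add: total)
  finally show ?thesis .
qed

lemma nn_integral_exp_decay_interval:
  fixes d s h :: real
  assumes d: "d > 0" and h: "h \<ge> 0"
  shows "(\<integral>\<^sup>+t. indicator {s..s+h} t * ennreal (exp (-d * (t - s))) \<partial>lborel)
       = ennreal ((1 - exp (-d * h)) / d)"
proof -
  have "((\<lambda>t. exp (-d * (t - s))) has_integral
          (- exp (-d * ((s + h) - s)) / d - - exp (-d * (s - s)) / d)) {s..s+h}"
  proof (rule fundamental_theorem_of_calculus)
    fix x
    have "((\<lambda>t. - exp (-d * (t - s)) / d) has_real_derivative exp (-d * (x - s))) (at x within {s..s+h})"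
      using d by (auto intro!: derivative_eq_intros)
    then show "((\<lambda>t. - exp (-d * (t - s)) / d) has_vector_derivative exp (-d * (x - s)))
        (at x within {s..s+h})"
      by (simp add: has_real_derivative_iff_has_vector_derivative)
  qed (use h in simp)
  then have "((\<lambda>t. exp (-d * (t - s))) has_integral ((1 - exp (-d * h)) / d)) {s..s+h}"
    by (simp add: diff_divide_distrib)
  then show ?thesis
    by (subst mult.commute) (rule nn_integral_has_integral_lebesgue', simp)
qed

lemma nn_integral_exp_decay_half_line:
  fixes d :: real
  assumes d: "d > 0"
  shows "(\<integral>\<^sup>+t. indicator {0..} t * ennreal (exp (-d * t)) \<partial>lborel) = ennreal (1 / d)"
proof -
  interpret exponential: prob_space "density lborel (exponential_density d)"
    using d by (rule prob_space_exponential_density)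
  have "1 = (\<integral>\<^sup>+t. ennreal (exponential_density d t) \<partial>lborel)"
    using exponential.emeasure_space_1 by (simp add: emeasure_density)
  also have "\<dots> = (\<integral>\<^sup>+t. ennreal d * (indicator {0..} t * ennreal (exp (-d * t))) \<partial>lborel)"
    using d by (intro nn_integral_cong)
      (auto simp: exponential_density_def indicator_def ennreal_mult mult.commute)
  also have "\<dots> = ennreal d * (\<integral>\<^sup>+t. indicator {0..} t * ennreal (exp (-d * t)) \<partial>lborel)"
    by (rule nn_integral_cmult) measurable
  finally have "ennreal (1 / d) * ennreal d * (\<integral>\<^sup>+t. indicator {0..} t * ennreal (exp (-d * t)) \<partial>lborel)
      = ennreal (1 / d)"
    by (simp add: mult.assoc)
  then show ?thesis
    using d by (simp add: ennreal_mult[symmetric])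
qed

lemma floor_grid_tendsto:
  fixes t :: real
  shows "(\<lambda>n. real_of_int \<lfloor>real (Suc n) * t\<rfloor> / real (Suc n)) \<longlonglongrightarrow> t"
proof (rule tendsto_sandwich[where f = "\<lambda>n. t - 1 / real (Suc n)" and h = "\<lambda>n. t"])
  have "t - 1 / real (Suc n) \<le> real_of_int \<lfloor>real (Suc n) * t\<rfloor> / real (Suc n)" for n
  proof -
    have "t - 1 / real (Suc n) = (real (Suc n) * t - 1) / real (Suc n)"
      by (simp add: field_simps)
    also have "\<dots> \<le> real_of_int \<lfloor>real (Suc n) * t\<rfloor> / real (Suc n)"
      by (rule divide_right_mono) linarith+
    finally show ?thesis .
  qed
  then show "\<forall>\<^sub>F n in sequentially. t - 1 / real (Suc n) \<le> real_of_int \<lfloor>real (Suc n) * t\<rfloor> / real (Suc n)"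
    by simp
  have "real_of_int \<lfloor>real (Suc n) * t\<rfloor> / real (Suc n) \<le> t" for n
    by (simp add: divide_le_eq mult.commute)
  then show "\<forall>\<^sub>F n in sequentially. real_of_int \<lfloor>real (Suc n) * t\<rfloor> / real (Suc n) \<le> t"
    by simp
  have "(\<lambda>n. 1 / real (Suc n)) \<longlonglongrightarrow> 0"
    by (rule LIMSEQ_inverse_real_of_nat[unfolded inverse_eq_divide])
  then show "(\<lambda>n. t - 1 / real (Suc n)) \<longlonglongrightarrow> t"
    by (auto intro: tendsto_eq_intros)
qed simp

lemma floor_grid_cell:
  fixes t h :: real
  assumes t: "0 \<le> t" and h: "0 < h"
  shows "real (nat \<lfloor>t / h\<rfloor>) * h \<le> t" "t \<le> real (nat \<lfloor>t / h\<rfloor>) * h + h"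
proof -
  have nat_floor: "real (nat \<lfloor>t / h\<rfloor>) = real_of_int \<lfloor>t / h\<rfloor>"
    using t h by simp
  have "real_of_int \<lfloor>t / h\<rfloor> \<le> t / h"
    by linarith
  from mult_right_mono[OF this less_imp_le[OF h]] show "real (nat \<lfloor>t / h\<rfloor>) * h \<le> t"
    using h by (simp add: nat_floor)
  have "t / h \<le> real_of_int \<lfloor>t / h\<rfloor> + 1"
    by linarith
  then show "t \<le> real (nat \<lfloor>t / h\<rfloor>) * h + h"
    using h by (simp add: nat_floor field_simps)
qed

definition round_up_to_grid :: "real \<Rightarrow> real \<Rightarrow> real" where
  "round_up_to_grid h t = real (nat \<lceil>t / h\<rceil>) * h"

lemma round_up_to_grid_bounds:
  fixes t h :: real
  assumes t: "0 \<le> t" and h: "0 < h"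
  shows "t \<le> round_up_to_grid h t" "round_up_to_grid h t \<le> t + h"
proof -
  have nat_ceiling: "real (nat \<lceil>t / h\<rceil>) = real_of_int \<lceil>t / h\<rceil>"
    using t h by simp
  have "t = t / h * h"
    using h by simp
  also have "\<dots> \<le> real_of_int \<lceil>t / h\<rceil> * h"
    using h by (intro mult_right_mono) auto
  finally show "t \<le> round_up_to_grid h t"
    unfolding round_up_to_grid_def nat_ceiling .
  have "real_of_int \<lceil>t / h\<rceil> * h \<le> (t / h + 1) * h"
    using h by (intro mult_right_mono) linarith+
  also have "\<dots> = t + h"
    using h by (simp add: field_simps)
  finally show "round_up_to_grid h t \<le> t + h"
    unfolding round_up_to_grid_def nat_ceiling .
qed

lemma round_up_to_grid_tendsto:
  fixes t :: real
  assumes t: "0 \<le> t" and h: "\<And>n. 0 < h n" "h \<longlonglongrightarrow> 0"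
  shows "(\<lambda>n. round_up_to_grid (h n) t) \<longlonglongrightarrow> t"
proof (rule tendsto_sandwich[where f = "\<lambda>n. t" and h = "\<lambda>n. t + h n"])
  show "\<forall>\<^sub>F n in sequentially. t \<le> round_up_to_grid (h n) t"
    "\<forall>\<^sub>F n in sequentially. round_up_to_grid (h n) t \<le> t + h n"
    using round_up_to_grid_bounds[OF t h(1)] by simp_all
  show "(\<lambda>n. t + h n) \<longlonglongrightarrow> t"
    using tendsto_add[OF tendsto_const h(2), of t] by simp
qed simp

lemma continuous_process_measurable:
  fixes X :: "real \<Rightarrow> 'a \<Rightarrow> real"
  assumes X: "\<And>t. X t \<in> borel_measurable N"
    and cont: "\<And>\<omega>. \<omega> \<in> space N \<Longrightarrow> continuous_on {0..} (\<lambda>t. X t \<omega>)"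
  shows "(\<lambda>x. X (max 0 (snd x)) (fst x)) \<in> borel_measurable (N \<Otimes>\<^sub>M lborel)"
proof (rule borel_measurable_LIMSEQ_real)
  define grid where "grid n t = max 0 (real_of_int \<lfloor>real (Suc n) * t\<rfloor> / real (Suc n))"
    for n :: nat and t :: real
  show "(\<lambda>x::'a \<times> real. X (grid n (snd x)) (fst x)) \<in> borel_measurable (N \<Otimes>\<^sub>M lborel)" for n
  proof -
    have "(\<lambda>x. X (max 0 (real_of_int k / real (Suc n))) (fst x)) \<in> borel_measurable (N \<Otimes>\<^sub>M lborel)"
      for k :: int
      using X by measurable
    moreover have "(\<lambda>x. \<lfloor>real (Suc n) * snd x\<rfloor>) \<in> measurable (N \<Otimes>\<^sub>M lborel) (count_space UNIV)"
      by measurable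
    ultimately show ?thesis
      unfolding grid_def by (rule measurable_compose_countable)
  qed
  fix x :: "'a \<times> real" assume "x \<in> space (N \<Otimes>\<^sub>M lborel)"
  then have \<omega>: "fst x \<in> space N"
    by (auto simp: space_pair_measure)
  have "(\<lambda>n. grid n (snd x)) \<longlonglongrightarrow> max 0 (snd x)"
    unfolding grid_def by (intro tendsto_max tendsto_const floor_grid_tendsto)
  then show "(\<lambda>n. X (grid n (snd x)) (fst x)) \<longlonglongrightarrow> X (max 0 (snd x)) (fst x)"
    by (rule continuous_on_tendsto_compose[OF cont[OF \<omega>]]) (auto simp: grid_def)
qed

lemma continuous_process_indicator_measurable:
  fixes X :: "real \<Rightarrow> 'a \<Rightarrow> real"
  assumes X: "\<And>t. X t \<in> borel_measurable N"
    and cont: "\<And>\<omega>. \<omega> \<in> space N \<Longrightarrow> continuous_on {0..} (\<lambda>t. X t \<omega>)"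
    and S: "S \<in> sets borel" "S \<subseteq> {0..}"
  shows "(\<lambda>x. indicator S (snd x) * ennreal (X (snd x) (fst x))) \<in> borel_measurable (N \<Otimes>\<^sub>M lborel)"
proof -
  have "(\<lambda>x. indicator S (snd x) * ennreal (X (max 0 (snd x)) (fst x)))
      \<in> borel_measurable (N \<Otimes>\<^sub>M lborel)"
    using continuous_process_measurable[OF X cont] S(1) by measurable
  also have "(\<lambda>x. indicator S (snd x) * ennreal (X (max 0 (snd x)) (fst x)))
      = (\<lambda>x. indicator S (snd x) * ennreal (X (snd x) (fst x)))"
    using S(2) by (auto simp: indicator_def max_def fun_eq_iff)
  finally show ?thesis .
qed

locale brownian_motion_space =
  fixes M :: "'a measure" and B :: "real \<Rightarrow> 'a \<Rightarrow> real"
  assumes std_brownian_motion: "std_brownian_motion M B"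
begin

sublocale prob_space M
  using std_brownian_motion by (simp add: std_brownian_motion_def)

lemma B_measurable[measurable]: "B t \<in> borel_measurable M"
  using std_brownian_motion by (simp add: std_brownian_motion_def)

lemma B_zero: "\<omega> \<in> space M \<Longrightarrow> B 0 \<omega> = 0"
  using std_brownian_motion by (simp add: std_brownian_motion_def)

lemma B_continuous: "\<omega> \<in> space M \<Longrightarrow> continuous_on {0..} (\<lambda>t. B t \<omega>)"
  using std_brownian_motion by (simp add: std_brownian_motion_def)

lemma B_increment_normal:
  "0 \<le> s \<Longrightarrow> s < t \<Longrightarrow>
    distributed M lborel (\<lambda>\<omega>. B t \<omega> - B s \<omega>) (normal_density 0 (sqrt (t - s)))"
  using std_brownian_motion by (simp add: std_brownian_motion_def)

lemma B_increment_indep: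
  "0 \<le> s \<Longrightarrow> s < t \<Longrightarrow>
    indep_sets (\<lambda>i::bool. if i then natural_filtration M B s
      else {(\<lambda>\<omega>. B t \<omega> - B s \<omega>) -` A \<inter> space M | A. A \<in> sets borel}) UNIV"
  using std_brownian_motion by (simp add: std_brownian_motion_def)

definition past :: "real \<Rightarrow> 'a measure" where
  "past s = sigma (space M) {B r -` A \<inter> space M | r A. 0 \<le> r \<and> r \<le> s \<and> A \<in> sets borel}"

lemma space_past[simp]: "space (past s) = space M"
  by (simp add: past_def space_measure_of_conv)

lemma sets_past: "sets (past s) = natural_filtration M B s"
  unfolding past_def natural_filtration_def by (rule sets_measure_of) auto

lemma B_past_measurable: "0 \<le> r \<Longrightarrow> r \<le> s \<Longrightarrow> B r \<in> borel_measurable (past s)"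
  by (rule measurableI) (auto simp: sets_past natural_filtration_def)

lemma natural_filtration_subset_events: "natural_filtration M B s \<subseteq> events"
  unfolding natural_filtration_def by (rule sets.sigma_sets_subset) auto

lemma past_measurable_imp_measurable: "f \<in> borel_measurable (past s) \<Longrightarrow> f \<in> borel_measurable M"
  using measurable_mono[of borel borel "past s" M] natural_filtration_subset_events
  by (auto simp: sets_past)

lemma augmented_filtration_subset_completion: "augmented_filtration M B s \<subseteq> sets (completion M)"
  unfolding augmented_filtration_def
proof (rule sigma_algebra.sigma_sets_subset)
  show "sigma_algebra (space M) (sets (completion M))"
    using sets.sigma_algebra_axioms[of "completion M"] by simp
  have "A \<in> sets (completion M)" if "A \<in> null_subsets M" for A
    using that by (auto simp: null_subsets_def intro: sets_completionI_sub)
  then show "natural_filtration M B s \<union> null_subsets M \<subseteq> sets (completion M)"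
    using natural_filtration_subset_events by auto
qed

lemma augmented_filtration_approx:
  assumes "A \<in> augmented_filtration M B s"
  shows "\<exists>A'\<in>natural_filtration M B s. \<exists>N\<in>null_sets M. (A - A') \<union> (A' - A) \<subseteq> N"
proof -
  have empty: "{} \<in> natural_filtration M B s"
    unfolding natural_filtration_def by (rule sigma_sets.Empty)
  from assms show ?thesis
    unfolding augmented_filtration_def
  proof (induction rule: sigma_sets.induct)
    case (Basic A)
    then show ?case
    proof
      assume "A \<in> natural_filtration M B s"
      then show ?thesis by (intro bexI[of _ A] bexI[of _ "{}"]) auto
    next
      assume "A \<in> null_subsets M"
      then obtain N where "N \<in> null_sets M" "A \<subseteq> N"
        by (auto simp: null_subsets_def)
      then show ?thesis using empty by (intro bexI[of _ "{}"] bexI[of _ N]) auto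
    qed
  next
    case Empty
    show ?case using empty by (intro bexI[of _ "{}"] bexI[of _ "{}"]) auto
  next
    case (Compl A)
    then obtain A' N where "A' \<in> natural_filtration M B s" "N \<in> null_sets M" "(A - A') \<union> (A' - A) \<subseteq> N"
      by blast
    moreover have "space M - A' \<in> natural_filtration M B s"
      using \<open>A' \<in> natural_filtration M B s\<close> unfolding natural_filtration_def by (rule sigma_sets.Compl)
    ultimately show ?case by (intro bexI[of _ "space M - A'"] bexI[of _ N]) auto
  next
    case (Union A)
    then obtain A' N where A': "\<And>i. A' i \<in> natural_filtration M B s" "\<And>i. N i \<in> null_sets M"
      "\<And>i. (A i - A' i) \<union> (A' i - A i) \<subseteq> N i"
      by metis
    have "(\<Union>i. A' i) \<in> natural_filtration M B s"
      using A'(1) unfolding natural_filtration_def by (rule sigma_sets.Union)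
    moreover have "(\<Union>i. N i) \<in> null_sets M"
      using A'(2) by (rule null_sets_UN)
    moreover have "((\<Union>i. A i) - (\<Union>i. A' i)) \<union> ((\<Union>i. A' i) - (\<Union>i. A i)) \<subseteq> (\<Union>i. N i)"
      using A'(3) by blast
    ultimately show ?case by blast
  qed
qed

lemma stopping_time_zero: "(\<lambda>_. 0) \<in> stopping_times_B M B"
  by (simp add: stopping_times_B_def augmented_filtration_def sigma_sets_top)

lemma stopping_time_top: "(\<lambda>_. \<top>) \<in> stopping_times_B M B"
  by (simp add: stopping_times_B_def augmented_filtration_def top_unique sigma_sets.Empty)

lemma nn_integral_mult_increment:
  assumes st: "0 \<le> s" "s < t"
    and g: "g \<in> borel_measurable (past s)" "\<And>\<omega>. 0 \<le> g \<omega>"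
    and w: "w \<in> borel_measurable borel" "\<And>x. 0 \<le> w x"
  shows "(\<integral>\<^sup>+\<omega>. ennreal (g \<omega> * w (B t \<omega> - B s \<omega>)) \<partial>M)
       = (\<integral>\<^sup>+\<omega>. ennreal (g \<omega>) \<partial>M) * (\<integral>\<^sup>+\<omega>. ennreal (w (B t \<omega> - B s \<omega>)) \<partial>M)"
proof -
  define X where "X i = (if i then (\<lambda>\<omega>. ennreal (g \<omega>)) else (\<lambda>\<omega>. ennreal (w (B t \<omega> - B s \<omega>))))"
    for i :: bool
  note [measurable] = g(1) w(1)
  have g_M[measurable]: "g \<in> borel_measurable M"
    using g(1) by (rule past_measurable_imp_measurable)
  have "indep_vars (\<lambda>_. borel) X UNIV"
    unfolding indep_vars_def2
  proof (intro conjI ballI)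
    show "random_variable borel (X i)" for i
      by (cases i; simp add: X_def; measurable)
    have g_past_events: "(\<lambda>\<omega>. ennreal (g \<omega>)) -` A \<inter> space M \<in> natural_filtration M B s"
      if "A \<in> sets borel" for A
      using measurable_sets[of "\<lambda>\<omega>. ennreal (g \<omega>)" "past s" borel A] that by (simp add: sets_past)
    have w_events: "X False -` A \<inter> space M \<in> {(\<lambda>\<omega>. B t \<omega> - B s \<omega>) -` A \<inter> space M | A. A \<in> sets borel}"
      if "A \<in> sets borel" for A
    proof -
      have "X False -` A \<inter> space M = (\<lambda>\<omega>. B t \<omega> - B s \<omega>) -` ((\<lambda>x. ennreal (w x)) -` A) \<inter> space M"
        by (auto simp: X_def)
      moreover have "(\<lambda>x. ennreal (w x)) -` A \<in> sets borel"
        using measurable_sets[of "\<lambda>x. ennreal (w x)" borel borel A] that by simp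
      ultimately show ?thesis by blast
    qed
    show "indep_sets (\<lambda>i. {X i -` A \<inter> space M | A. A \<in> sets borel}) UNIV"
      by (rule indep_sets_mono_sets[OF B_increment_indep[OF st]])
        (use g_past_events w_events in \<open>auto simp: X_def\<close>)
  qed
  then have "(\<integral>\<^sup>+\<omega>. (\<Prod>i\<in>UNIV. X i \<omega>) \<partial>M) = (\<Prod>i\<in>UNIV. \<integral>\<^sup>+\<omega>. X i \<omega> \<partial>M)"
    by (intro indep_vars_nn_integral) auto
  then show ?thesis
    using g(2) w(2) by (simp add: X_def UNIV_bool mult.commute ennreal_mult)
qed

lemma nn_integral_exp_increment:
  assumes "0 \<le> s" "s < u"
  shows "(\<integral>\<^sup>+\<omega>. ennreal (exp (c + \<sigma> * (B u \<omega> - B s \<omega>))) \<partial>M) = ennreal (exp (c + \<sigma>\<^sup>2 * (u - s) / 2))"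
proof -
  have "(\<integral>\<^sup>+\<omega>. ennreal (exp (c + \<sigma> * (B u \<omega> - B s \<omega>))) \<partial>M)
      = (\<integral>\<^sup>+\<omega>. ennreal (exp c) * ennreal (exp (\<sigma> * (B u \<omega> - B s \<omega>))) \<partial>M)"
    by (simp add: exp_add ennreal_mult)
  also have "\<dots> = ennreal (exp c) * ennreal (exp (\<sigma>\<^sup>2 * (sqrt (u - s))\<^sup>2 / 2))"
    using assms by (simp add: nn_integral_cmult nn_integral_exp_normal[OF _ B_increment_normal[OF assms]])
  finally show ?thesis
    using assms by (simp add: ennreal_mult[symmetric] exp_add[symmetric])
qed

definition gbm :: "real \<Rightarrow> real \<Rightarrow> real \<Rightarrow> 'a \<Rightarrow> real" where
  "gbm \<sigma> r t \<omega> = exp ((r - \<sigma>\<^sup>2 / 2) * t + \<sigma> * B t \<omega>)"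

lemma gbm_nonneg: "0 \<le> gbm \<sigma> r t \<omega>"
  by (simp add: gbm_def)

lemma gbm_zero: "\<omega> \<in> space M \<Longrightarrow> gbm \<sigma> r 0 \<omega> = 1"
  by (simp add: gbm_def B_zero)

lemma gbm_measurable[measurable]: "gbm \<sigma> r t \<in> borel_measurable M"
  unfolding gbm_def by measurable

lemma gbm_completion_measurable[measurable]: "gbm \<sigma> r t \<in> borel_measurable (completion M)"
  by (rule measurable_completion) simp

lemma gbm_past_measurable: "0 \<le> t \<Longrightarrow> t \<le> s \<Longrightarrow> gbm \<sigma> r t \<in> borel_measurable (past s)"
  unfolding gbm_def using B_past_measurable[of t s] by measurable

lemma gbm_continuous: "\<omega> \<in> space M \<Longrightarrow> continuous_on {0..} (\<lambda>t. gbm \<sigma> r t \<omega>)"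
  unfolding gbm_def by (intro continuous_intros B_continuous)

lemma gbm_round_up_tendsto:
  assumes \<omega>: "\<omega> \<in> space M" and t: "0 \<le> t" and h: "\<And>n. 0 < h n" "h \<longlonglongrightarrow> 0"
  shows "(\<lambda>n. gbm \<sigma> r (round_up_to_grid (h n) t) \<omega>) \<longlonglongrightarrow> gbm \<sigma> r t \<omega>"
proof -
  have "0 \<le> round_up_to_grid (h n) t" for n
    using round_up_to_grid_bounds(1)[OF t h(1)[of n]] t by linarith
  then show ?thesis
    by (intro continuous_on_tendsto_compose[OF gbm_continuous[OF \<omega>]] round_up_to_grid_tendsto[OF t h]
        always_eventually) (auto simp: t)
qed

lemma gbm_discount: "exp (- q * t) * gbm \<sigma> r t \<omega> = gbm \<sigma> (r - q) t \<omega>"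
  unfolding gbm_def by (simp add: exp_add[symmetric] algebra_simps)

lemma gbm_indicator_measurable:
  assumes "S \<in> sets borel" "S \<subseteq> {0..}"
  shows "(\<lambda>x. indicator S (snd x) * ennreal (gbm \<sigma> r (snd x) (fst x)))
    \<in> borel_measurable (completion M \<Otimes>\<^sub>M lborel)"
  using gbm_continuous assms by (intro continuous_process_indicator_measurable) simp_all

lemma gbm_indicator_measurable_path:
  assumes "\<omega> \<in> space M" "S \<in> sets borel" "S \<subseteq> {0..}"
  shows "(\<lambda>t. indicator S t * ennreal (gbm \<sigma> r t \<omega>)) \<in> borel_measurable lborel"
  using measurable_Pair2[OF gbm_indicator_measurable[OF assms(2,3)], of \<omega> \<sigma> r] assms(1) by simp

lemma nn_integral_indicator_gbm_natural:
  assumes s: "0 \<le> s" "s \<le> u" and A: "A \<in> natural_filtration M B s"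
  shows "(\<integral>\<^sup>+\<omega>. indicator A \<omega> * ennreal (gbm \<sigma> r u \<omega>) \<partial>M)
       = (\<integral>\<^sup>+\<omega>. indicator A \<omega> * ennreal (gbm \<sigma> r s \<omega>) \<partial>M) * ennreal (exp (r * (u - s)))"
proof (cases "s = u")
  case False
  then have su: "s < u"
    using s by simp
  define c where "c = (r - \<sigma>\<^sup>2 / 2) * (u - s)"
  have gbm_split: "gbm \<sigma> r u \<omega> = gbm \<sigma> r s \<omega> * exp (c + \<sigma> * (B u \<omega> - B s \<omega>))" for \<omega>
  proof -
    have "(r - \<sigma>\<^sup>2 / 2) * u + \<sigma> * B u \<omega>
        = ((r - \<sigma>\<^sup>2 / 2) * s + \<sigma> * B s \<omega>) + (c + \<sigma> * (B u \<omega> - B s \<omega>))"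
      by (simp add: c_def field_simps)
    then show ?thesis
      unfolding gbm_def by (simp add: exp_add[symmetric])
  qed
  have "A \<in> sets (past s)"
    using A by (simp add: sets_past)
  then have past: "(\<lambda>\<omega>. indicator A \<omega> * gbm \<sigma> r s \<omega>) \<in> borel_measurable (past s)"
    using gbm_past_measurable[of s s \<sigma> r] s by measurable
  have "c + \<sigma>\<^sup>2 * (u - s) / 2 = r * (u - s)"
    by (simp add: c_def field_simps)
  then have increment: "(\<integral>\<^sup>+\<omega>. ennreal (exp (c + \<sigma> * (B u \<omega> - B s \<omega>))) \<partial>M) = ennreal (exp (r * (u - s)))"
    using nn_integral_exp_increment[OF s(1) su, of c \<sigma>] by simp
  have "(\<integral>\<^sup>+\<omega>. indicator A \<omega> * ennreal (gbm \<sigma> r u \<omega>) \<partial>M)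
      = (\<integral>\<^sup>+\<omega>. ennreal (indicator A \<omega> * gbm \<sigma> r s \<omega> * exp (c + \<sigma> * (B u \<omega> - B s \<omega>))) \<partial>M)"
    by (intro nn_integral_cong) (simp add: gbm_split indicator_def)
  also have "\<dots> = (\<integral>\<^sup>+\<omega>. ennreal (indicator A \<omega> * gbm \<sigma> r s \<omega>) \<partial>M) * ennreal (exp (r * (u - s)))"
    unfolding increment[symmetric]
    by (rule nn_integral_mult_increment[OF s(1) su past, where w = "\<lambda>z. exp (c + \<sigma> * z)"])
      (simp_all add: gbm_nonneg)
  also have "(\<integral>\<^sup>+\<omega>. ennreal (indicator A \<omega> * gbm \<sigma> r s \<omega>) \<partial>M)
      = (\<integral>\<^sup>+\<omega>. indicator A \<omega> * ennreal (gbm \<sigma> r s \<omega>) \<partial>M)"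
    by (intro nn_integral_cong) (simp add: indicator_def)
  finally show ?thesis .
qed simp

lemma nn_integral_indicator_gbm:
  assumes s: "0 \<le> s" "s \<le> u" and A: "A \<in> augmented_filtration M B s"
  shows "(\<integral>\<^sup>+\<omega>. indicator A \<omega> * ennreal (gbm \<sigma> r u \<omega>) \<partial>completion M)
       = (\<integral>\<^sup>+\<omega>. indicator A \<omega> * ennreal (gbm \<sigma> r s \<omega>) \<partial>completion M) * ennreal (exp (r * (u - s)))"
proof -
  obtain A' N where A': "A' \<in> natural_filtration M B s" "N \<in> null_sets M" "(A - A') \<union> (A' - A) \<subseteq> N"
    using augmented_filtration_approx[OF A] by blast
  have "AE \<omega> in M. indicator A \<omega> = (indicator A' \<omega> :: ennreal)"
    using AE_not_in[OF A'(2)] by eventually_elim (use A'(3) in \<open>auto simp: indicator_def\<close>)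
  then have "(\<integral>\<^sup>+\<omega>. indicator A \<omega> * ennreal (gbm \<sigma> r v \<omega>) \<partial>completion M)
      = (\<integral>\<^sup>+\<omega>. indicator A' \<omega> * ennreal (gbm \<sigma> r v \<omega>) \<partial>M)" for v
    unfolding nn_integral_completion by (intro nn_integral_cong_AE) (auto elim: AE_mp)
  then show ?thesis
    using nn_integral_indicator_gbm_natural[OF s A'(1)] by simp
qed

lemma nn_integral_gbm:
  assumes "0 \<le> t"
  shows "(\<integral>\<^sup>+\<omega>. ennreal (gbm \<sigma> r t \<omega>) \<partial>completion M) = ennreal (exp (r * t))"
proof -
  interpret completion: prob_space "completion M"
    by (rule prob_space_completion)
  have indicator_space: "(\<integral>\<^sup>+\<omega>. f \<omega> \<partial>completion M) = (\<integral>\<^sup>+\<omega>. indicator (space M) \<omega> * f \<omega> \<partial>completion M)"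
    for f :: "'a \<Rightarrow> ennreal"
    by (intro nn_integral_cong) simp
  have "space M \<in> augmented_filtration M B 0"
    by (simp add: augmented_filtration_def sigma_sets_top)
  then have "(\<integral>\<^sup>+\<omega>. ennreal (gbm \<sigma> r t \<omega>) \<partial>completion M)
      = (\<integral>\<^sup>+\<omega>. ennreal (gbm \<sigma> r 0 \<omega>) \<partial>completion M) * ennreal (exp (r * t))"
    using nn_integral_indicator_gbm[of 0 t "space M" \<sigma> r] assms by (simp add: indicator_space[symmetric])
  also have "(\<integral>\<^sup>+\<omega>. ennreal (gbm \<sigma> r 0 \<omega>) \<partial>completion M) = (\<integral>\<^sup>+\<omega>. 1 \<partial>completion M)"
    by (intro nn_integral_cong) (simp add: gbm_zero)
  also have "\<dots> = 1"
    using completion.emeasure_space_1 by simp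
  finally show ?thesis by simp
qed

lemma nn_integral_indicator_gbm_interval:
  assumes d: "d > 0" and s: "0 \<le> s" and h: "0 \<le> h" and A: "A \<in> augmented_filtration M B s"
  shows "(\<integral>\<^sup>+\<omega>. indicator A \<omega> * (\<integral>\<^sup>+t. indicator {s..s+h} t * ennreal (gbm \<sigma> (-d) t \<omega>) \<partial>lborel) \<partial>completion M)
       = ennreal ((1 - exp (-d * h)) / d) * (\<integral>\<^sup>+\<omega>. indicator A \<omega> * ennreal (gbm \<sigma> (-d) s \<omega>) \<partial>completion M)"
    (is "_ = _ * ?K")
proof -
  interpret completion: prob_space "completion M"
    by (rule prob_space_completion)
  interpret pair_sigma_finite "completion M" lborel ..
  have "A \<in> sets (completion M)"
    using A augmented_filtration_subset_completion by auto
  moreover have "{s..s+h} \<subseteq> {0..}"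
    using s by auto
  ultimately have joint: "(\<lambda>x. indicator A (fst x) * (indicator {s..s+h} (snd x) * ennreal (gbm \<sigma> (-d) (snd x) (fst x))))
      \<in> borel_measurable (completion M \<Otimes>\<^sub>M lborel)"
    using gbm_indicator_measurable[of "{s..s+h}" \<sigma> "-d"] by measurable
  have "(\<integral>\<^sup>+\<omega>. indicator A \<omega> * (\<integral>\<^sup>+t. indicator {s..s+h} t * ennreal (gbm \<sigma> (-d) t \<omega>) \<partial>lborel) \<partial>completion M)
      = (\<integral>\<^sup>+\<omega>. (\<integral>\<^sup>+t. indicator A \<omega> * (indicator {s..s+h} t * ennreal (gbm \<sigma> (-d) t \<omega>)) \<partial>lborel) \<partial>completion M)"
    using s by (intro nn_integral_cong nn_integral_cmult[symmetric] gbm_indicator_measurable_path) auto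
  also have "\<dots> = (\<integral>\<^sup>+t. (\<integral>\<^sup>+\<omega>. indicator A \<omega> * (indicator {s..s+h} t * ennreal (gbm \<sigma> (-d) t \<omega>)) \<partial>completion M) \<partial>lborel)"
    by (rule Fubini'[symmetric]) (use joint in \<open>simp add: split_beta'\<close>)
  also have "\<dots> = (\<integral>\<^sup>+t. indicator {s..s+h} t * ennreal (exp (-d * (t - s))) * ?K \<partial>lborel)"
  proof (intro nn_integral_cong)
    fix t :: real
    show "(\<integral>\<^sup>+\<omega>. indicator A \<omega> * (indicator {s..s+h} t * ennreal (gbm \<sigma> (-d) t \<omega>)) \<partial>completion M)
        = indicator {s..s+h} t * ennreal (exp (-d * (t - s))) * ?K"
    proof (cases "t \<in> {s..s+h}")
      case True
      then show ?thesis
        using nn_integral_indicator_gbm[OF s _ A, of t \<sigma> "-d"] by (simp add: mult_ac)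
    qed simp
  qed
  also have "\<dots> = (\<integral>\<^sup>+t. indicator {s..s+h} t * ennreal (exp (-d * (t - s))) \<partial>lborel) * ?K"
    by (rule nn_integral_multc) measurable
  also have "\<dots> = ennreal ((1 - exp (-d * h)) / d) * ?K"
    by (simp only: nn_integral_exp_decay_interval[OF d h])
  finally show ?thesis .
qed

lemma gbm_interval_step:
  assumes d: "d > 0" and s: "0 \<le> s" and h: "0 \<le> h" and A: "A \<in> augmented_filtration M B s"
  shows "ennreal d * (\<integral>\<^sup>+\<omega>. indicator A \<omega> * (\<integral>\<^sup>+t. indicator {s..s+h} t * ennreal (gbm \<sigma> (-d) t \<omega>) \<partial>lborel) \<partial>completion M)
         + (\<integral>\<^sup>+\<omega>. indicator A \<omega> * ennreal (gbm \<sigma> (-d) (s + h) \<omega>) \<partial>completion M)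
       = (\<integral>\<^sup>+\<omega>. indicator A \<omega> * ennreal (gbm \<sigma> (-d) s \<omega>) \<partial>completion M)"
proof -
  define K where "K = (\<integral>\<^sup>+\<omega>. indicator A \<omega> * ennreal (gbm \<sigma> (-d) s \<omega>) \<partial>completion M)"
  define x where "x = ennreal ((1 - exp (-d * h)) / d)"
  have "exp (-d * h) \<le> 1"
    using d h by simp
  then have total: "ennreal d * x + ennreal (exp (-d * h)) = 1"
    using d by (simp add: x_def ennreal_mult[symmetric] ennreal_plus[symmetric] del: ennreal_plus)
  have interval: "(\<integral>\<^sup>+\<omega>. indicator A \<omega> * (\<integral>\<^sup>+t. indicator {s..s+h} t * ennreal (gbm \<sigma> (-d) t \<omega>) \<partial>lborel) \<partial>completion M)
      = x * K"
    unfolding x_def K_def by (rule nn_integral_indicator_gbm_interval[OF d s h A])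
  have endpoint: "(\<integral>\<^sup>+\<omega>. indicator A \<omega> * ennreal (gbm \<sigma> (-d) (s + h) \<omega>) \<partial>completion M)
      = K * ennreal (exp (-d * h))"
    using nn_integral_indicator_gbm[OF s _ A, of "s + h" \<sigma> "-d"] h by (simp add: K_def)
  have "ennreal d * (x * K) + K * ennreal (exp (-d * h)) = K * (ennreal d * x + ennreal (exp (-d * h)))"
    by (simp only: distrib_left mult_ac)
  also have "\<dots> = K"
    by (simp only: total mult_1_right)
  finally show ?thesis
    unfolding interval endpoint K_def[symmetric] .
qed

(* Optional stopping for tau rounded up to the grid h * N: gbm_interval_step holds on every grid
   cell before stopping, so the expectations telescope; stopped_gbm_bound below lets the mesh
   tend to 0 using Fatou's lemma. *)

context
  fixes \<sigma> d h :: real and \<tau> :: "'a \<Rightarrow> ennreal"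
  assumes d: "d > 0" and h: "h > 0" and \<tau>: "\<tau> \<in> stopping_times_B M B"
begin

definition stopped_by :: "nat \<Rightarrow> 'a set" where
  "stopped_by j = {\<omega> \<in> space M. \<tau> \<omega> \<le> ennreal (real j * h)}"

definition running :: "nat \<Rightarrow> 'a set" where
  "running j = space M - stopped_by j"

definition grid_integral :: "nat \<Rightarrow> 'a \<Rightarrow> ennreal" where
  "grid_integral j \<omega> = (\<integral>\<^sup>+t. indicator {real j * h .. real j * h + h} t * ennreal (gbm \<sigma> (-d) t \<omega>) \<partial>lborel)"

definition grid_term :: "nat \<Rightarrow> 'a \<Rightarrow> ennreal" where
  "grid_term j \<omega> = ennreal d * (indicator (running j) \<omega> * grid_integral j \<omega>)
     + indicator (running j \<inter> stopped_by (Suc j)) \<omega> * ennreal (gbm \<sigma> (-d) (real (Suc j) * h) \<omega>)"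

definition grid_bound :: "'a \<Rightarrow> ennreal" where
  "grid_bound \<omega> = indicator (stopped_by 0) \<omega> * ennreal (gbm \<sigma> (-d) 0 \<omega>) + (\<Sum>j. grid_term j \<omega>)"

definition running_mass :: "nat \<Rightarrow> ennreal" where
  "running_mass j = (\<integral>\<^sup>+\<omega>. indicator (running j) \<omega> * ennreal (gbm \<sigma> (-d) (real j * h) \<omega>) \<partial>completion M)"

lemma stopped_by_event: "stopped_by j \<in> augmented_filtration M B (real j * h)"
  using \<tau> h unfolding stopped_by_def stopping_times_B_def by auto

lemma running_event: "running j \<in> augmented_filtration M B (real j * h)"
  using stopped_by_event[of j] unfolding running_def augmented_filtration_def by (rule sigma_sets.Compl)

lemma running_Suc_subset: "running (Suc j) \<subseteq> running j"
proof -
  have "ennreal (real j * h) \<le> ennreal (real (Suc j) * h)"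
    using h by (intro ennreal_leI) simp
  then show ?thesis
    by (auto simp: running_def stopped_by_def dest: order_trans)
qed

lemma grid_events_completion[measurable]:
  "stopped_by j \<in> sets (completion M)" "running j \<in> sets (completion M)"
  using stopped_by_event running_event augmented_filtration_subset_completion by blast+

lemma grid_integral_measurable[measurable]: "grid_integral j \<in> borel_measurable (completion M)"
proof -
  have "{real j * h .. real j * h + h} \<subseteq> {0..}"
    using h by auto
  then have "(\<lambda>x. indicator {real j * h .. real j * h + h} (snd x) * ennreal (gbm \<sigma> (-d) (snd x) (fst x)))
      \<in> borel_measurable (completion M \<Otimes>\<^sub>M lborel)"
    by (intro gbm_indicator_measurable) auto
  then show ?thesis
    unfolding grid_integral_def[abs_def] by (rule lborel.borel_measurable_nn_integral[unfolded split_beta'])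
qed

lemma grid_term_measurable[measurable]: "grid_term j \<in> borel_measurable (completion M)"
  unfolding grid_term_def[abs_def] by measurable

lemma grid_bound_measurable[measurable]: "grid_bound \<in> borel_measurable (completion M)"
  unfolding grid_bound_def[abs_def] by measurable

lemma running_mass_step: "(\<integral>\<^sup>+\<omega>. grid_term j \<omega> \<partial>completion M) + running_mass (Suc j) = running_mass j"
proof -
  have "ennreal d * (\<integral>\<^sup>+\<omega>. indicator (running j) \<omega> * grid_integral j \<omega> \<partial>completion M)
      + (\<integral>\<^sup>+\<omega>. indicator (running j) \<omega> * ennreal (gbm \<sigma> (-d) (real j * h + h) \<omega>) \<partial>completion M)
      = running_mass j"
    unfolding running_mass_def grid_integral_def
    using gbm_interval_step[OF d _ less_imp_le[OF h] running_event[of j]] h by simp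
  moreover have "(\<integral>\<^sup>+\<omega>. indicator (running j) \<omega> * ennreal (gbm \<sigma> (-d) (real j * h + h) \<omega>) \<partial>completion M)
      = (\<integral>\<^sup>+\<omega>. indicator (running j \<inter> stopped_by (Suc j)) \<omega> * ennreal (gbm \<sigma> (-d) (real (Suc j) * h) \<omega>)
          + indicator (running (Suc j)) \<omega> * ennreal (gbm \<sigma> (-d) (real (Suc j) * h) \<omega>) \<partial>completion M)"
    using running_Suc_subset[of j]
    by (intro nn_integral_cong) (auto simp: indicator_def running_def algebra_simps)
  moreover have "(\<integral>\<^sup>+\<omega>. grid_term j \<omega> \<partial>completion M)
      = ennreal d * (\<integral>\<^sup>+\<omega>. indicator (running j) \<omega> * grid_integral j \<omega> \<partial>completion M)
        + (\<integral>\<^sup>+\<omega>. indicator (running j \<inter> stopped_by (Suc j)) \<omega> * ennreal (gbm \<sigma> (-d) (real (Suc j) * h) \<omega>) \<partial>completion M)"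
    unfolding grid_term_def by (simp add: nn_integral_add nn_integral_cmult)
  ultimately show ?thesis
    by (simp add: nn_integral_add running_mass_def add.assoc)
qed

lemma running_mass_telescope:
  "(\<integral>\<^sup>+\<omega>. indicator (stopped_by 0) \<omega> * ennreal (gbm \<sigma> (-d) 0 \<omega>) \<partial>completion M)
     + (\<Sum>j<N. \<integral>\<^sup>+\<omega>. grid_term j \<omega> \<partial>completion M) + running_mass N = 1"
proof (induction N)
  case 0
  have "(\<integral>\<^sup>+\<omega>. indicator (stopped_by 0) \<omega> * ennreal (gbm \<sigma> (-d) 0 \<omega>) \<partial>completion M) + running_mass 0
      = (\<integral>\<^sup>+\<omega>. ennreal (gbm \<sigma> (-d) 0 \<omega>) \<partial>completion M)"
    unfolding running_mass_def
    by (subst nn_integral_add[symmetric]; (measurable)?)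
      (auto simp: running_def indicator_def intro!: nn_integral_cong)
  then show ?case
    using nn_integral_gbm[of 0 \<sigma> "-d"] by simp
next
  case (Suc N)
  then show ?case
    by (simp only: sum.lessThan_Suc add.assoc running_mass_step)
qed

lemma grid_bound_integral_le_one: "(\<integral>\<^sup>+\<omega>. grid_bound \<omega> \<partial>completion M) \<le> 1"
proof -
  have "(\<integral>\<^sup>+\<omega>. grid_bound \<omega> \<partial>completion M)
      = (\<integral>\<^sup>+\<omega>. indicator (stopped_by 0) \<omega> * ennreal (gbm \<sigma> (-d) 0 \<omega>) \<partial>completion M)
        + (\<Sum>j. \<integral>\<^sup>+\<omega>. grid_term j \<omega> \<partial>completion M)"
    unfolding grid_bound_def by (simp add: nn_integral_add nn_integral_suminf)
  also have "\<dots> \<le> 1"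
  proof (subst add.commute, rule ennreal_suminf_bound_add)
    fix N
    show "(\<Sum>j<N. \<integral>\<^sup>+\<omega>. grid_term j \<omega> \<partial>completion M)
        + (\<integral>\<^sup>+\<omega>. indicator (stopped_by 0) \<omega> * ennreal (gbm \<sigma> (-d) 0 \<omega>) \<partial>completion M) \<le> 1"
      using running_mass_telescope[of N] by (metis add.commute le_iff_add)
  qed
  finally show ?thesis .
qed

lemma running_integral_le:
  assumes \<omega>: "\<omega> \<in> space M"
  shows "(\<integral>\<^sup>+t. indicator {t. 0 \<le> t \<and> ennreal t < \<tau> \<omega>} t * ennreal (gbm \<sigma> (-d) t \<omega>) \<partial>lborel)
       \<le> (\<Sum>j. indicator (running j) \<omega> * grid_integral j \<omega>)"
proof -
  have path: "(\<lambda>t. indicator {real j * h .. real j * h + h} t * ennreal (gbm \<sigma> (-d) t \<omega>))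
      \<in> borel_measurable lborel" for j
    using h by (intro gbm_indicator_measurable_path[OF \<omega>]) auto
  have "(\<Sum>j. indicator (running j) \<omega> * grid_integral j \<omega>)
      = (\<Sum>j. \<integral>\<^sup>+t. indicator (running j) \<omega>
          * (indicator {real j * h .. real j * h + h} t * ennreal (gbm \<sigma> (-d) t \<omega>)) \<partial>lborel)"
    unfolding grid_integral_def using path by (simp add: nn_integral_cmult)
  also have "\<dots> = (\<integral>\<^sup>+t. (\<Sum>j. indicator (running j) \<omega>
          * (indicator {real j * h .. real j * h + h} t * ennreal (gbm \<sigma> (-d) t \<omega>))) \<partial>lborel)"
    using path by (simp add: borel_measurable_times_ennreal nn_integral_suminf)
  moreover have "indicator {t. 0 \<le> t \<and> ennreal t < \<tau> \<omega>} t * ennreal (gbm \<sigma> (-d) t \<omega>)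
      \<le> (\<Sum>j. indicator (running j) \<omega> * (indicator {real j * h .. real j * h + h} t * ennreal (gbm \<sigma> (-d) t \<omega>)))"
    for t
  proof (cases "0 \<le> t \<and> ennreal t < \<tau> \<omega>")
    case True
    obtain j where "real j * h \<le> t" "t \<le> real j * h + h"
      using floor_grid_cell[of t h] True h by blast
    moreover have "\<omega> \<in> running j"
    proof -
      have "ennreal (real j * h) < \<tau> \<omega>"
        using True \<open>real j * h \<le> t\<close> by (meson ennreal_leI order_le_less_trans)
      then show ?thesis
        using \<omega> by (auto simp: running_def stopped_by_def)
    qed
    ultimately have "indicator {t. 0 \<le> t \<and> ennreal t < \<tau> \<omega>} t * ennreal (gbm \<sigma> (-d) t \<omega>)
        = (\<Sum>i\<in>{j}. indicator (running i) \<omega> * (indicator {real i * h .. real i * h + h} t * ennreal (gbm \<sigma> (-d) t \<omega>)))"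
      using True by simp
    also have "\<dots> \<le> (\<Sum>i. indicator (running i) \<omega> * (indicator {real i * h .. real i * h + h} t * ennreal (gbm \<sigma> (-d) t \<omega>)))"
      by (rule sum_le_suminf) auto
    finally show ?thesis .
  qed simp
  ultimately show ?thesis
    by (simp add: nn_integral_mono)
qed

lemma terminal_value_le:
  assumes \<omega>: "\<omega> \<in> space M"
  shows "(if \<tau> \<omega> = \<top> then 0 else ennreal (gbm \<sigma> (-d) (round_up_to_grid h (enn2real (\<tau> \<omega>))) \<omega>))
       \<le> indicator (stopped_by 0) \<omega> * ennreal (gbm \<sigma> (-d) 0 \<omega>)
         + (\<Sum>j. indicator (running j \<inter> stopped_by (Suc j)) \<omega> * ennreal (gbm \<sigma> (-d) (real (Suc j) * h) \<omega>))"
proof (cases "\<tau> \<omega> = \<top>")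
  case False
  define T where "T = enn2real (\<tau> \<omega>)"
  have T: "\<tau> \<omega> = ennreal T" "0 \<le> T"
    using False by (simp_all add: T_def less_top)
  show ?thesis
  proof (cases "nat \<lceil>T / h\<rceil>")
    case 0
    then have "T / h \<le> 0"
      by linarith
    then have "T = 0"
      using T(2) h by (simp add: divide_le_0_iff)
    then have "\<omega> \<in> stopped_by 0"
      using \<omega> T(1) by (simp add: stopped_by_def)
    then show ?thesis
      using False 0 by (simp add: round_up_to_grid_def flip: T_def)
  next
    case (Suc j)
    then have "real j < T / h" "T / h \<le> real j + 1"
      by linarith+
    then have "real j * h < T" "T \<le> real (Suc j) * h"
      using h by (simp_all add: field_simps)
    then have "\<omega> \<in> running j \<inter> stopped_by (Suc j)"
      using \<omega> T h by (auto simp: running_def stopped_by_def ennreal_le_iff)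
    then have "(if \<tau> \<omega> = \<top> then 0 else ennreal (gbm \<sigma> (-d) (round_up_to_grid h (enn2real (\<tau> \<omega>))) \<omega>))
        = (\<Sum>i\<in>{j}. indicator (running i \<inter> stopped_by (Suc i)) \<omega> * ennreal (gbm \<sigma> (-d) (real (Suc i) * h) \<omega>))"
      using False Suc by (simp add: round_up_to_grid_def flip: T_def)
    also have "\<dots> \<le> (\<Sum>i. indicator (running i \<inter> stopped_by (Suc i)) \<omega> * ennreal (gbm \<sigma> (-d) (real (Suc i) * h) \<omega>))"
      by (rule sum_le_suminf) auto
    finally show ?thesis
      by (simp add: add_increasing)
  qed
qed simp

lemma grid_bound_ge:
  assumes \<omega>: "\<omega> \<in> space M"
  shows "ennreal d * (\<integral>\<^sup>+t. indicator {t. 0 \<le> t \<and> ennreal t < \<tau> \<omega>} t * ennreal (gbm \<sigma> (-d) t \<omega>) \<partial>lborel)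
     + (if \<tau> \<omega> = \<top> then 0 else ennreal (gbm \<sigma> (-d) (round_up_to_grid h (enn2real (\<tau> \<omega>))) \<omega>))
     \<le> grid_bound \<omega>"
proof -
  have "grid_bound \<omega> = ennreal d * (\<Sum>j. indicator (running j) \<omega> * grid_integral j \<omega>)
      + (indicator (stopped_by 0) \<omega> * ennreal (gbm \<sigma> (-d) 0 \<omega>)
        + (\<Sum>j. indicator (running j \<inter> stopped_by (Suc j)) \<omega> * ennreal (gbm \<sigma> (-d) (real (Suc j) * h) \<omega>)))"
    unfolding grid_bound_def grid_term_def
    by (subst suminf_add[symmetric]) (auto simp: ennreal_suminf_cmult add_ac)
  then show ?thesis
    using running_integral_le[OF \<omega>] terminal_value_le[OF \<omega>] by (simp add: add_mono mult_left_mono)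
qed

end

lemma stopping_time_measurable:
  assumes "\<tau> \<in> stopping_times_B M B"
  shows "\<tau> \<in> borel_measurable (completion M)"
proof (rule borel_measurableI_le)
  fix y :: ennreal
  show "{\<omega> \<in> space (completion M). \<tau> \<omega> \<le> y} \<in> sets (completion M)"
  proof (cases y)
    case (real t)
    then show ?thesis
      using assms augmented_filtration_subset_completion[of t] by (auto simp: stopping_times_B_def)
  qed simp
qed

lemma stopped_gbm_measurable:
  assumes \<tau>: "\<tau> \<in> stopping_times_B M B"
  shows "(\<lambda>\<omega>. ennreal d * (\<integral>\<^sup>+t. indicator {t. 0 \<le> t \<and> ennreal t < \<tau> \<omega>} t * ennreal (gbm \<sigma> r t \<omega>) \<partial>lborel)
            + (if \<tau> \<omega> = \<top> then 0 else ennreal (gbm \<sigma> r (enn2real (\<tau> \<omega>)) \<omega>)))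
    \<in> borel_measurable (completion M)"
proof -
  note \<tau>_measurable[measurable] = stopping_time_measurable[OF \<tau>]
  have joint[measurable]: "(\<lambda>x. gbm \<sigma> r (max 0 (snd x)) (fst x)) \<in> borel_measurable (completion M \<Otimes>\<^sub>M lborel)"
    using gbm_continuous by (intro continuous_process_measurable) simp_all
  have "(\<lambda>x. if 0 \<le> snd x \<and> ennreal (snd x) < \<tau> (fst x) then ennreal (gbm \<sigma> r (max 0 (snd x)) (fst x)) else 0)
      \<in> borel_measurable (completion M \<Otimes>\<^sub>M lborel)"
    by measurable
  also have "(\<lambda>x. if 0 \<le> snd x \<and> ennreal (snd x) < \<tau> (fst x) then ennreal (gbm \<sigma> r (max 0 (snd x)) (fst x)) else 0)
      = (\<lambda>x. indicator {t. 0 \<le> t \<and> ennreal t < \<tau> (fst x)} (snd x) * ennreal (gbm \<sigma> r (snd x) (fst x)))"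
    by (auto simp: fun_eq_iff max_def)
  finally have [measurable]:
    "(\<lambda>\<omega>. \<integral>\<^sup>+t. indicator {t. 0 \<le> t \<and> ennreal t < \<tau> \<omega>} t * ennreal (gbm \<sigma> r t \<omega>) \<partial>lborel)
      \<in> borel_measurable (completion M)"
    by (rule lborel.borel_measurable_nn_integral[unfolded split_beta'])
  have "(\<lambda>\<omega>. (\<omega>, enn2real (\<tau> \<omega>))) \<in> completion M \<rightarrow>\<^sub>M completion M \<Otimes>\<^sub>M lborel"
    by measurable
  from measurable_compose[OF this joint] have [measurable]: "(\<lambda>\<omega>. gbm \<sigma> r (enn2real (\<tau> \<omega>)) \<omega>) \<in> borel_measurable (completion M)"
    by simp
  show ?thesis
    by measurable
qed

lemma stopped_gbm_bound:
  assumes d: "d > 0" and \<tau>: "\<tau> \<in> stopping_times_B M B"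
  shows "(\<integral>\<^sup>+\<omega>. ennreal d * (\<integral>\<^sup>+t. indicator {t. 0 \<le> t \<and> ennreal t < \<tau> \<omega>} t * ennreal (gbm \<sigma> (-d) t \<omega>) \<partial>lborel)
            + (if \<tau> \<omega> = \<top> then 0 else ennreal (gbm \<sigma> (-d) (enn2real (\<tau> \<omega>)) \<omega>)) \<partial>completion M) \<le> 1"
proof -
  define h where "h n = 1 / real (Suc n)" for n
  have h: "0 < h n" for n
    by (simp add: h_def)
  have "h \<longlonglongrightarrow> 0"
    unfolding h_def by (rule LIMSEQ_inverse_real_of_nat[unfolded inverse_eq_divide])
  define running_cost where
    "running_cost \<omega> = (\<integral>\<^sup>+t. indicator {t. 0 \<le> t \<and> ennreal t < \<tau> \<omega>} t * ennreal (gbm \<sigma> (-d) t \<omega>) \<partial>lborel)"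
    for \<omega>
  define terminal where
    "terminal g \<omega> = (if \<tau> \<omega> = \<top> then 0 else ennreal (gbm \<sigma> (-d) (g (enn2real (\<tau> \<omega>))) \<omega>))"
    for g :: "real \<Rightarrow> real" and \<omega>
  have le_liminf: "ennreal d * running_cost \<omega> + terminal id \<omega> \<le> liminf (\<lambda>n. grid_bound \<sigma> d (h n) \<tau> \<omega>)"
    if \<omega>: "\<omega> \<in> space M" for \<omega>
  proof -
    have "(\<lambda>n. terminal (round_up_to_grid (h n)) \<omega>) \<longlonglongrightarrow> terminal id \<omega>"
    proof (cases "\<tau> \<omega> = \<top>")
      case False
      have "(\<lambda>n. gbm \<sigma> (-d) (round_up_to_grid (h n) (enn2real (\<tau> \<omega>))) \<omega>) \<longlonglongrightarrow> gbm \<sigma> (-d) (enn2real (\<tau> \<omega>)) \<omega>"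
        by (rule gbm_round_up_tendsto[OF \<omega> enn2real_nonneg h \<open>h \<longlonglongrightarrow> 0\<close>])
      then show ?thesis
        using False by (simp add: terminal_def tendsto_ennrealI)
    qed (simp add: terminal_def)
    then have "ennreal d * running_cost \<omega> + terminal id \<omega>
        = liminf (\<lambda>n. ennreal d * running_cost \<omega> + terminal (round_up_to_grid (h n)) \<omega>)"
      by (intro lim_imp_Liminf[symmetric] tendsto_add tendsto_const) simp_all
    also have "\<dots> \<le> liminf (\<lambda>n. grid_bound \<sigma> d (h n) \<tau> \<omega>)"
      using grid_bound_ge[OF d h \<tau> \<omega>]
      by (intro Liminf_mono always_eventually allI) (simp add: running_cost_def terminal_def)
    finally show ?thesis .
  qed
  have "(\<integral>\<^sup>+\<omega>. ennreal d * running_cost \<omega> + terminal id \<omega> \<partial>completion M)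
      \<le> (\<integral>\<^sup>+\<omega>. liminf (\<lambda>n. grid_bound \<sigma> d (h n) \<tau> \<omega>) \<partial>completion M)"
    using le_liminf by (intro nn_integral_mono) simp
  also have "\<dots> \<le> liminf (\<lambda>n. \<integral>\<^sup>+\<omega>. grid_bound \<sigma> d (h n) \<tau> \<omega> \<partial>completion M)"
    using grid_bound_measurable[OF d h \<tau>] by (intro nn_integral_liminf) simp
  also have "\<dots> \<le> 1"
    using grid_bound_integral_le_one[OF d h \<tau>]
    by (intro order_trans[OF Liminf_le_Limsup Limsup_bounded] always_eventually allI) simp_all
  finally show ?thesis
    by (simp add: running_cost_def terminal_def id_def)
qed

lemma reward_gbm:
  "reward (gbm \<sigma> r) q a f \<tau> \<omega>
    = (\<integral>\<^sup>+t. indicator {t. 0 \<le> t \<and> ennreal t < \<tau> \<omega>} t * ennreal (a * gbm \<sigma> (r - q) t \<omega>) \<partial>lborel)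
      + (if \<tau> \<omega> = \<top> then 0 else ennreal (f * gbm \<sigma> (r - q) (enn2real (\<tau> \<omega>)) \<omega>))"
  unfolding reward_def gbm_discount[symmetric] by (simp add: mult_ac)

lemma gbm_payoff_le_scaled:
  assumes \<omega>: "\<omega> \<in> space M" and c: "0 \<le> c" "a \<le> c * d" "f \<le> c" and d: "0 \<le> d"
  shows "(\<integral>\<^sup>+t. indicator {t. 0 \<le> t \<and> ennreal t < \<tau> \<omega>} t * ennreal (a * gbm \<sigma> r t \<omega>) \<partial>lborel)
         + (if \<tau> \<omega> = \<top> then 0 else ennreal (f * gbm \<sigma> r (enn2real (\<tau> \<omega>)) \<omega>))
       \<le> ennreal c * (ennreal d * (\<integral>\<^sup>+t. indicator {t. 0 \<le> t \<and> ennreal t < \<tau> \<omega>} t * ennreal (gbm \<sigma> r t \<omega>) \<partial>lborel)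
         + (if \<tau> \<omega> = \<top> then 0 else ennreal (gbm \<sigma> r (enn2real (\<tau> \<omega>)) \<omega>)))"
proof -
  have "{t. 0 \<le> t \<and> ennreal t < \<tau> \<omega>} \<in> sets borel"
    by measurable
  then have path: "(\<lambda>t. indicator {t. 0 \<le> t \<and> ennreal t < \<tau> \<omega>} t * ennreal (gbm \<sigma> r t \<omega>)) \<in> borel_measurable lborel"
    by (intro gbm_indicator_measurable_path[OF \<omega>]) auto
  have "(\<integral>\<^sup>+t. indicator {t. 0 \<le> t \<and> ennreal t < \<tau> \<omega>} t * ennreal (a * gbm \<sigma> r t \<omega>) \<partial>lborel)
      \<le> (\<integral>\<^sup>+t. ennreal (c * d) * (indicator {t. 0 \<le> t \<and> ennreal t < \<tau> \<omega>} t * ennreal (gbm \<sigma> r t \<omega>)) \<partial>lborel)"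
    using c d gbm_nonneg[of \<sigma> r _ \<omega>]
    by (intro nn_integral_mono) (auto simp: indicator_def ennreal_mult'[symmetric] intro!: ennreal_leI mult_right_mono)
  also have "\<dots> = ennreal (c * d) * (\<integral>\<^sup>+t. indicator {t. 0 \<le> t \<and> ennreal t < \<tau> \<omega>} t * ennreal (gbm \<sigma> r t \<omega>) \<partial>lborel)"
    using path by (rule nn_integral_cmult)
  finally have running: "(\<integral>\<^sup>+t. indicator {t. 0 \<le> t \<and> ennreal t < \<tau> \<omega>} t * ennreal (a * gbm \<sigma> r t \<omega>) \<partial>lborel)
      \<le> ennreal (c * d) * (\<integral>\<^sup>+t. indicator {t. 0 \<le> t \<and> ennreal t < \<tau> \<omega>} t * ennreal (gbm \<sigma> r t \<omega>) \<partial>lborel)" .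
  have terminal: "(if \<tau> \<omega> = \<top> then 0 else ennreal (f * gbm \<sigma> r (enn2real (\<tau> \<omega>)) \<omega>))
      \<le> ennreal c * (if \<tau> \<omega> = \<top> then 0 else ennreal (gbm \<sigma> r (enn2real (\<tau> \<omega>)) \<omega>))"
    using c gbm_nonneg[of \<sigma> r _ \<omega>] by (auto simp: ennreal_mult'[symmetric] intro!: ennreal_leI mult_right_mono)
  show ?thesis
    using add_mono[OF running terminal] c(1) d by (simp add: ennreal_mult distrib_left mult.assoc)
qed

lemma reward_gbm_le:
  assumes q: "r < q" and a: "0 \<le> a" and f: "0 \<le> f" and \<tau>: "\<tau> \<in> stopping_times_B M B"
  shows "(\<integral>\<^sup>+\<omega>. reward (gbm \<sigma> r) q a f \<tau> \<omega> \<partial>completion M) \<le> ennreal (max (a / (q - r)) f)"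
proof -
  define d where "d = q - r"
  define c where "c = max (a / d) f"
  have d: "0 < d" and discount: "r - q = -d"
    using q by (simp_all add: d_def)
  have c: "0 \<le> c" "a \<le> c * d" "f \<le> c"
    using d f by (auto simp: c_def pos_divide_le_eq[symmetric])
  define F where "F \<omega> = ennreal d * (\<integral>\<^sup>+t. indicator {t. 0 \<le> t \<and> ennreal t < \<tau> \<omega>} t * ennreal (gbm \<sigma> (-d) t \<omega>) \<partial>lborel)
     + (if \<tau> \<omega> = \<top> then 0 else ennreal (gbm \<sigma> (-d) (enn2real (\<tau> \<omega>)) \<omega>))" for \<omega>
  have "(\<integral>\<^sup>+\<omega>. reward (gbm \<sigma> r) q a f \<tau> \<omega> \<partial>completion M) \<le> (\<integral>\<^sup>+\<omega>. ennreal c * F \<omega> \<partial>completion M)"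
    unfolding reward_gbm discount F_def
    using gbm_payoff_le_scaled[OF _ c less_imp_le[OF d]] by (intro nn_integral_mono) simp
  also have "\<dots> = ennreal c * (\<integral>\<^sup>+\<omega>. F \<omega> \<partial>completion M)"
    unfolding F_def using stopped_gbm_measurable[OF \<tau>] by (rule nn_integral_cmult)
  also have "\<dots> \<le> ennreal c"
    using stopped_gbm_bound[OF d \<tau>, of \<sigma>] mult_left_mono[of _ 1 "ennreal c"] by (simp add: F_def)
  finally show ?thesis
    by (simp add: c_def d_def)
qed

lemma reward_gbm_stop_now:
  assumes "0 \<le> f"
  shows "(\<integral>\<^sup>+\<omega>. reward (gbm \<sigma> r) q a f (\<lambda>_. 0) \<omega> \<partial>completion M) = ennreal f"
proof -
  interpret completion: prob_space "completion M"
    by (rule prob_space_completion)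
  have "(\<integral>\<^sup>+\<omega>. reward (gbm \<sigma> r) q a f (\<lambda>_. 0) \<omega> \<partial>completion M) = (\<integral>\<^sup>+\<omega>. ennreal f \<partial>completion M)"
    by (intro nn_integral_cong) (simp add: reward_def gbm_zero)
  also have "\<dots> = ennreal f"
    using completion.emeasure_space_1 by simp
  finally show ?thesis .
qed

lemma nn_integral_gbm_half_line:
  assumes d: "0 < d"
  shows "(\<integral>\<^sup>+\<omega>. \<integral>\<^sup>+t. indicator {0..} t * ennreal (gbm \<sigma> (-d) t \<omega>) \<partial>lborel \<partial>completion M) = ennreal (1 / d)"
proof -
  interpret completion: prob_space "completion M"
    by (rule prob_space_completion)
  interpret pair_sigma_finite "completion M" lborel ..
  have joint: "(\<lambda>x. indicator {0..} (snd x) * ennreal (gbm \<sigma> (-d) (snd x) (fst x)))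
      \<in> borel_measurable (completion M \<Otimes>\<^sub>M lborel)"
    by (rule gbm_indicator_measurable) auto
  have "(\<integral>\<^sup>+\<omega>. \<integral>\<^sup>+t. indicator {0..} t * ennreal (gbm \<sigma> (-d) t \<omega>) \<partial>lborel \<partial>completion M)
      = (\<integral>\<^sup>+t. \<integral>\<^sup>+\<omega>. indicator {0..} t * ennreal (gbm \<sigma> (-d) t \<omega>) \<partial>completion M \<partial>lborel)"
    by (rule Fubini'[symmetric]) (use joint in \<open>simp add: split_beta'\<close>)
  also have "\<dots> = (\<integral>\<^sup>+t. indicator {0..} t * ennreal (exp (-d * t)) \<partial>lborel)"
  proof (intro nn_integral_cong)
    fix t :: real
    show "(\<integral>\<^sup>+\<omega>. indicator {0..} t * ennreal (gbm \<sigma> (-d) t \<omega>) \<partial>completion M)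
        = indicator {0..} t * ennreal (exp (-d * t))"
      by (cases "0 \<le> t") (simp_all add: nn_integral_gbm)
  qed
  also have "\<dots> = ennreal (1 / d)"
    by (rule nn_integral_exp_decay_half_line[OF d])
  finally show ?thesis .
qed

lemma reward_gbm_never_stop:
  assumes q: "r < q" and a: "0 \<le> a"
  shows "(\<integral>\<^sup>+\<omega>. reward (gbm \<sigma> r) q a f (\<lambda>_. \<top>) \<omega> \<partial>completion M) = ennreal (a / (q - r))"
proof -
  define d where "d = q - r"
  have d: "0 < d" and discount: "r - q = -d"
    using q by (simp_all add: d_def)
  have path: "(\<lambda>t. indicator {0..} t * ennreal (gbm \<sigma> (-d) t \<omega>)) \<in> borel_measurable lborel"
    if "\<omega> \<in> space M" for \<omega>
    using that by (rule gbm_indicator_measurable_path) auto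
  have "(\<lambda>x. indicator {0..} (snd x) * ennreal (gbm \<sigma> (-d) (snd x) (fst x)))
      \<in> borel_measurable (completion M \<Otimes>\<^sub>M lborel)"
    by (rule gbm_indicator_measurable) auto
  then have integral_measurable:
    "(\<lambda>\<omega>. \<integral>\<^sup>+t. indicator {0..} t * ennreal (gbm \<sigma> (-d) t \<omega>) \<partial>lborel) \<in> borel_measurable (completion M)"
    by (rule lborel.borel_measurable_nn_integral[unfolded split_beta'])
  have "(\<integral>\<^sup>+\<omega>. reward (gbm \<sigma> r) q a f (\<lambda>_. \<top>) \<omega> \<partial>completion M)
      = (\<integral>\<^sup>+\<omega>. ennreal a * (\<integral>\<^sup>+t. indicator {0..} t * ennreal (gbm \<sigma> (-d) t \<omega>) \<partial>lborel) \<partial>completion M)"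
    unfolding reward_gbm discount
    using a path by (intro nn_integral_cong) (auto simp: indicator_def ennreal_mult' mult_ac nn_integral_cmult[symmetric])
  also have "\<dots> = ennreal a * ennreal (1 / d)"
    using integral_measurable by (simp add: nn_integral_cmult nn_integral_gbm_half_line[OF d])
  finally show ?thesis
    using a d by (simp add: d_def ennreal_mult[symmetric])
qed

theorem optimal_stopping_value_gbm:
  assumes "r < q" "0 \<le> a" "0 \<le> f"
  shows "(SUP \<tau>\<in>stopping_times_B M B. \<integral>\<^sup>+\<omega>. reward (gbm \<sigma> r) q a f \<tau> \<omega> \<partial>completion M)
       = ennreal (max (a / (q - r)) f)"
proof (rule antisym)
  show "(SUP \<tau>\<in>stopping_times_B M B. \<integral>\<^sup>+\<omega>. reward (gbm \<sigma> r) q a f \<tau> \<omega> \<partial>completion M)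
      \<le> ennreal (max (a / (q - r)) f)"
    using reward_gbm_le assms by (intro SUP_least) auto
  have "ennreal f \<le> (SUP \<tau>\<in>stopping_times_B M B. \<integral>\<^sup>+\<omega>. reward (gbm \<sigma> r) q a f \<tau> \<omega> \<partial>completion M)"
    using SUP_upper[OF stopping_time_zero] reward_gbm_stop_now assms by metis
  moreover have "ennreal (a / (q - r))
      \<le> (SUP \<tau>\<in>stopping_times_B M B. \<integral>\<^sup>+\<omega>. reward (gbm \<sigma> r) q a f \<tau> \<omega> \<partial>completion M)"
    using SUP_upper[OF stopping_time_top] reward_gbm_never_stop assms by metis
  ultimately show "ennreal (max (a / (q - r)) f)
      \<le> (SUP \<tau>\<in>stopping_times_B M B. \<integral>\<^sup>+\<omega>. reward (gbm \<sigma> r) q a f \<tau> \<omega> \<partial>completion M)"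
    by (simp add: max_def)
qed

end

theorem lemma4p5:
  fixes M :: "'a measure" and B :: "real \<Rightarrow> 'a \<Rightarrow> real"
    and \<theta> \<alpha> \<sigma> \<rho> \<nu> \<rho>h \<mu>m \<mu>M \<mu>h \<mu> :: real
  assumes BM: "std_brownian_motion M B"
    and "\<theta> > 0" and "\<alpha> \<ge> 0" and "\<sigma> > 0" and "\<rho> > 0" and "0 \<le> \<nu>" and "\<nu> \<le> 1"
    and "\<rho>h > 0" and "0 < \<mu>m" and "\<mu>m \<le> \<mu>M" and "\<mu>m \<le> \<mu>h" and "\<mu>h \<le> \<mu>M"
    and "\<theta> - \<alpha> - \<rho> - \<mu>m < 0"
    and "\<mu>m \<le> \<mu>" and "\<mu> \<le> \<mu>M"
  shows "(SUP \<tau>\<in>stopping_times_B M B.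
            \<integral>\<^sup>+ \<omega>. reward (\<lambda>t \<omega>. exp ((\<theta> - \<alpha> - \<sigma>\<^sup>2 / 2) * t + \<sigma> * B t \<omega>))
                        (\<rho> + \<mu>) (\<alpha> + \<nu> * \<mu>) (fhat \<rho>h \<mu>h \<rho> \<mu>) \<tau> \<omega> \<partial>completion M)
         = ennreal (max (betaN \<alpha> \<nu> \<rho> \<theta> \<mu>) (fhat \<rho>h \<mu>h \<rho> \<mu>))"
proof -
  interpret brownian_motion_space M B
    using BM by unfold_locales
  have X: "(\<lambda>t \<omega>. exp ((\<theta> - \<alpha> - \<sigma>\<^sup>2 / 2) * t + \<sigma> * B t \<omega>)) = gbm \<sigma> (\<theta> - \<alpha>)"
    by (simp add: fun_eq_iff gbm_def)
  have "\<theta> - \<alpha> < \<rho> + \<mu>" "0 \<le> \<alpha> + \<nu> * \<mu>" "0 \<le> fhat \<rho>h \<mu>h \<rho> \<mu>"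
    using assms by (simp_all add: fhat_def)
  moreover have "betaN \<alpha> \<nu> \<rho> \<theta> \<mu> = (\<alpha> + \<nu> * \<mu>) / (\<rho> + \<mu> - (\<theta> - \<alpha>))"
    by (simp add: betaN_def algebra_simps)
  ultimately show ?thesis
    unfolding X by (simp add: optimal_stopping_value_gbm)
qed

end
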